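(* Let $\mathcal A$ be a set of graphs, and let $\mathcal C$ be a bridge-stable class of connected graphs each of which is bridge-addable in $\mathcal A$. Then for $R_n\in_u\mathcal A$ (with $\mathcal A_n\ne\emptyset$), $\kappa^+(R_n,\mathcal C)$ is stochastically dominated by $1+\mathrm{Po}(1)$.
   Context: $\mathcal A_n$: graphs in $\mathcal A$ on vertex set $[n]$; $R_n\in_u\mathcal A$: uniform on $\mathcal A_n$. A connected graph $H$ is bridge-addable in $\mathcal A$ if whenever $G\in\mathcal A$ has a component isomorphic to $H$ and $e$ is a non-edge between that component and the rest of $G$, $G+e\in\mathcal A$. $\mathcal C$ bridge-stable: joining by an edge two disjoint graphs both in $\mathcal C$ yields a graph in $\mathcal C$, and joining by an edge two disjoint graphs exactly one of which is in $\mathcal C$ yields a graph not in $\mathcal C$. $\kappa(G,\mathcal C)$: number of components of $G$ in $\mathcal C$; $\kappa^+(G,\mathcal C)=\kappa(G,\mathcal C)$ if every component of $G$ is in $\mathcal C$, and $\kappa(G,\mathcal C)+1$ otherwise. $X$ is stochastically dominated by $Y$ if $\mathbb P(X>t)\le\mathbb P(Y>t)$ for all $t$. *)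

theory Defs
  imports "HOL-Probability.Probability"
begin

text \<open>A (finite, simple, labelled) graph is a pair (V, E) of a vertex set V of naturals
  and a set E of 2-element subsets of V.\<close>
type_synonym graph = "nat set \<times> nat set set"

definition verts :: "graph \<Rightarrow> nat set" where "verts G = fst G"
definition edges :: "graph \<Rightarrow> nat set set" where "edges G = snd G"

definition is_graph :: "graph \<Rightarrow> bool" where
  "is_graph G \<longleftrightarrow> finite (verts G) \<and>
     (\<forall>e\<in>edges G. \<exists>u v. u \<noteq> v \<and> u \<in> verts G \<and> v \<in> verts G \<and> e = {u, v})"

definition reach :: "graph \<Rightarrow> nat \<Rightarrow> nat \<Rightarrow> bool" where
  "reach G = (\<lambda>u v. {u, v} \<in> edges G)\<^sup>*\<^sup>*"

definition connected_graph :: "graph \<Rightarrow> bool" where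
  "connected_graph G \<longleftrightarrow> verts G \<noteq> {} \<and> (\<forall>u\<in>verts G. \<forall>v\<in>verts G. reach G u v)"

definition induced :: "graph \<Rightarrow> nat set \<Rightarrow> graph" where
  "induced G S = (S, {e \<in> edges G. e \<subseteq> S})"

definition components :: "graph \<Rightarrow> graph set" where
  "components G = {induced G {v \<in> verts G. reach G u v} | u. u \<in> verts G}"

definition graph_iso :: "graph \<Rightarrow> graph \<Rightarrow> bool" where
  "graph_iso G H \<longleftrightarrow> (\<exists>f. bij_betw f (verts G) (verts H) \<and>
     (\<forall>u\<in>verts G. \<forall>v\<in>verts G. {u, v} \<in> edges G \<longleftrightarrow> {f u, f v} \<in> edges H))"

definition add_edge :: "graph \<Rightarrow> nat \<Rightarrow> nat \<Rightarrow> graph" where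
  "add_edge G u v = (verts G, insert {u, v} (edges G))"

definition join_by_edge :: "graph \<Rightarrow> graph \<Rightarrow> nat \<Rightarrow> nat \<Rightarrow> graph" where
  "join_by_edge G H u v = (verts G \<union> verts H, insert {u, v} (edges G \<union> edges H))"

definition iso_closed :: "graph set \<Rightarrow> bool" where
  "iso_closed \<C> \<longleftrightarrow> (\<forall>G H. G \<in> \<C> \<longrightarrow> is_graph H \<longrightarrow> graph_iso G H \<longrightarrow> H \<in> \<C>)"

definition bridge_addable :: "graph set \<Rightarrow> graph \<Rightarrow> bool" where
  "bridge_addable \<A> H \<longleftrightarrow> connected_graph H \<and>
     (\<forall>G\<in>\<A>. \<forall>K\<in>components G. graph_iso K H \<longrightarrow>
        (\<forall>u\<in>verts K. \<forall>v\<in>verts G - verts K. {u, v} \<notin> edges G \<longrightarrow> add_edge G u v \<in> \<A>))"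

definition bridge_stable :: "graph set \<Rightarrow> bool" where
  "bridge_stable \<C> \<longleftrightarrow> (\<forall>G H u v. is_graph G \<longrightarrow> is_graph H \<longrightarrow>
       verts G \<inter> verts H = {} \<longrightarrow> u \<in> verts G \<longrightarrow> v \<in> verts H \<longrightarrow>
       ((G \<in> \<C> \<and> H \<in> \<C> \<longrightarrow> join_by_edge G H u v \<in> \<C>) \<and>
        ((G \<in> \<C>) \<noteq> (H \<in> \<C>) \<longrightarrow> join_by_edge G H u v \<notin> \<C>)))"

definition kappa :: "graph \<Rightarrow> graph set \<Rightarrow> nat" where
  "kappa G \<C> = card {K \<in> components G. K \<in> \<C>}"

definition kappa_plus :: "graph \<Rightarrow> graph set \<Rightarrow> nat" where
  "kappa_plus G \<C> = (if components G \<subseteq> \<C> then kappa G \<C> else kappa G \<C> + 1)"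

definition slice :: "graph set \<Rightarrow> nat \<Rightarrow> graph set" where
  "slice \<A> n = {G \<in> \<A>. verts G = {1..n}}"

end

theory Submission
  imports Defs
begin

text \<open>
  Write \<open>S\<^sub>j\<close> for the graphs of \<open>\<A>\<^sub>n\<close> with \<open>\<kappa>\<^sup>+ = j\<close>. Label each vertex by its
  component if that component lies in \<open>\<C>\<close>, and by one common dummy label otherwise; then
  \<open>\<kappa>\<^sup>+\<close> is the number of labels. If \<open>G \<in> S\<^sub>k\<^sub>+\<^sub>1\<close> and \<open>a, b\<close> carry different labels,
  then by bridge-addability and bridge-stability \<open>G + ab \<in> S\<^sub>k\<close>, and \<open>ab\<close> is a bridge of it.
  There are at least \<open>2k(n - k)\<close> such ordered pairs, while a graph with at least \<open>k\<close>
  components has at most \<open>2(n - k)\<close> ordered bridges. Double counting gives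
  \<open>k |S\<^sub>k\<^sub>+\<^sub>1| \<le> |S\<^sub>k|\<close>, so \<open>|S\<^sub>k\<^sub>+\<^sub>1| k!\<close> decreases in \<open>k\<close>: the distribution of
  \<open>\<kappa>\<^sup>+ - 1\<close> decays at least as fast as the Poisson(1) weights, hence its tails are no
  heavier than those of \<open>Po(1)\<close>.
\<close>

section \<open>Reachability and components\<close>

lemma reach_refl [simp]: "reach G x x"
  unfolding reach_def by simp

lemma reach_trans: "reach G x y \<Longrightarrow> reach G y z \<Longrightarrow> reach G x z"
  unfolding reach_def by (rule rtranclp_trans)

lemma reach_edge: "{x, y} \<in> edges G \<Longrightarrow> reach G x y"
  unfolding reach_def by (rule r_into_rtranclp)

lemma reach_sym: "reach G x y \<Longrightarrow> reach G y x"
  unfolding reach_def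
proof (induction rule: rtranclp_induct)
  case (step y z)
  have "{z, y} \<in> edges G" using step(2) by (simp add: insert_commute)
  then show ?case using step(3) by (rule converse_rtranclp_into_rtranclp)
qed simp

lemma reach_iff_of_reach: "reach G a b \<Longrightarrow> reach G a c \<longleftrightarrow> reach G b c"
  using reach_sym reach_trans by blast

lemma reach_mono: "edges G \<subseteq> edges H \<Longrightarrow> reach G x y \<Longrightarrow> reach H x y"
  unfolding reach_def by (erule rtranclp_mono[THEN predicate2D, rotated]) auto

definition comp_of :: "graph \<Rightarrow> nat \<Rightarrow> nat set" where
  "comp_of G u = {v \<in> verts G. reach G u v}"

definition comp_sets :: "graph \<Rightarrow> nat set set" where
  "comp_sets G = comp_of G ` verts G"

lemma components_eq_induced_comp_sets: "components G = induced G ` comp_sets G"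
  unfolding components_def comp_sets_def comp_of_def by auto

lemma comp_of_self: "u \<in> verts G \<Longrightarrow> u \<in> comp_of G u"
  unfolding comp_of_def by simp

lemma comp_of_eq: "x \<in> comp_of G u \<Longrightarrow> comp_of G x = comp_of G u"
  unfolding comp_of_def by (auto intro: reach_trans reach_sym)

lemma comp_of_eq_iff: "u \<in> verts G \<Longrightarrow> comp_of G u = comp_of G v \<longleftrightarrow> reach G u v"
  unfolding comp_of_def by (auto intro: reach_trans reach_sym)

lemma comp_sets_disjoint:
  "S \<in> comp_sets G \<Longrightarrow> T \<in> comp_sets G \<Longrightarrow> x \<in> S \<Longrightarrow> x \<in> T \<Longrightarrow> S = T"
  unfolding comp_sets_def by (metis comp_of_eq imageE)

lemma comp_sets_nonempty: "S \<in> comp_sets G \<Longrightarrow> S \<noteq> {}"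
  unfolding comp_sets_def using comp_of_self by blast

lemma comp_sets_subset: "S \<in> comp_sets G \<Longrightarrow> S \<subseteq> verts G"
  unfolding comp_sets_def comp_of_def by auto

lemma card_comp_sets_le: "finite (verts G) \<Longrightarrow> card (comp_sets G) \<le> card (verts G)"
  unfolding comp_sets_def by (rule card_image_le)

lemma inj_on_induced: "inj_on (induced G) X"
  by (rule inj_onI) (metis fst_conv induced_def)

definition comps_in :: "graph set \<Rightarrow> graph \<Rightarrow> nat set set" where
  "comps_in \<C> G = {S \<in> comp_sets G. induced G S \<in> \<C>}"

lemma comps_in_subset: "comps_in \<C> G \<subseteq> comp_sets G"
  unfolding comps_in_def by auto

lemma kappa_plus_eq:
  "kappa_plus G \<C> = card (comps_in \<C> G) + (if comps_in \<C> G = comp_sets G then 0 else 1)"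
proof -
  have "{K \<in> components G. K \<in> \<C>} = induced G ` comps_in \<C> G"
    unfolding components_eq_induced_comp_sets comps_in_def by auto
  then have "kappa G \<C> = card (comps_in \<C> G)"
    unfolding kappa_def by (simp add: card_image inj_on_induced)
  moreover have "components G \<subseteq> \<C> \<longleftrightarrow> comps_in \<C> G = comp_sets G"
    unfolding components_eq_induced_comp_sets comps_in_def by auto
  ultimately show ?thesis unfolding kappa_plus_def by simp
qed

lemma kappa_plus_le_card_comp_sets:
  assumes "finite (verts G)"
  shows "kappa_plus G \<C> \<le> card (comp_sets G)"
proof (cases "comps_in \<C> G = comp_sets G")
  case False
  then have "card (comps_in \<C> G) < card (comp_sets G)"
    using assms comps_in_subset by (metis comp_sets_def finite_imageI psubset_card_mono psubsetI)
  then show ?thesis using False by (simp add: kappa_plus_eq)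
qed (simp add: kappa_plus_eq)

lemma kappa_plus_le_card_verts: "finite (verts G) \<Longrightarrow> kappa_plus G \<C> \<le> card (verts G)"
  using kappa_plus_le_card_comp_sets card_comp_sets_le le_trans by blast

section \<open>Adding and deleting edges\<close>

lemma graph_eq_Pair: "G = (verts G, edges G)"
  by (simp add: verts_def edges_def)

lemma verts_induced [simp]: "verts (induced G S) = S"
  and edges_induced [simp]: "edges (induced G S) = {e \<in> edges G. e \<subseteq> S}"
  unfolding induced_def verts_def edges_def by auto

lemma is_graph_induced:
  assumes "is_graph G" "S \<subseteq> verts G"
  shows "is_graph (induced G S)"
proof -
  have "finite S" using assms(1) finite_subset[OF assms(2)] unfolding is_graph_def by simp
  moreover have "\<exists>a b. a \<noteq> b \<and> a \<in> S \<and> b \<in> S \<and> e = {a, b}" if e: "e \<in> edges G" "e \<subseteq> S" for e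
  proof -
    obtain a b where "a \<noteq> b" "e = {a, b}"
      using bspec[OF conjunct2[OF assms(1)[unfolded is_graph_def]] e(1)] by blast
    then show ?thesis using e(2) by auto
  qed
  ultimately show ?thesis unfolding is_graph_def by simp
qed

lemma verts_add_edge [simp]: "verts (add_edge G u v) = verts G"
  and edges_add_edge [simp]: "edges (add_edge G u v) = insert {u, v} (edges G)"
  unfolding add_edge_def verts_def edges_def by auto

lemma add_edge_commute: "add_edge G a b = add_edge G b a"
  by (simp add: add_edge_def insert_commute)

lemma reach_add_edge:
  "reach (add_edge G u v) a b \<longleftrightarrow>
     reach G a b \<or> (reach G a u \<and> reach G v b) \<or> (reach G a v \<and> reach G u b)"
proof
  assume "reach (add_edge G u v) a b"
  then show "reach G a b \<or> (reach G a u \<and> reach G v b) \<or> (reach G a v \<and> reach G u b)"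
    unfolding reach_def[of "add_edge G u v"]
  proof (induction rule: rtranclp_induct)
    case (step y z)
    show ?case
    proof (cases "{y, z} \<in> edges G")
      case True
      then show ?thesis using step(3) reach_edge reach_trans by blast
    next
      case False
      then have "(y = u \<and> z = v) \<or> (y = v \<and> z = u)"
        using step(2) by (auto simp: doubleton_eq_iff)
      then show ?thesis using step(3) reach_trans reach_refl by blast
    qed
  qed simp
next
  have "reach G x y \<Longrightarrow> reach (add_edge G u v) x y" for x y
    by (rule reach_mono) auto
  moreover have "reach (add_edge G u v) u v" "reach (add_edge G u v) v u"
    by (auto intro: reach_edge simp: insert_commute)
  moreover assume "reach G a b \<or> (reach G a u \<and> reach G v b) \<or> (reach G a v \<and> reach G u b)"
  ultimately show "reach (add_edge G u v) a b" using reach_trans by meson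
qed

definition del_edge :: "graph \<Rightarrow> nat set \<Rightarrow> graph" where
  "del_edge G e = (verts G, edges G - {e})"

lemma verts_del_edge [simp]: "verts (del_edge G e) = verts G"
  and edges_del_edge [simp]: "edges (del_edge G e) = edges G - {e}"
  unfolding del_edge_def verts_def edges_def by auto

lemma del_edge_add_edge: "{a, b} \<notin> edges G \<Longrightarrow> del_edge (add_edge G a b) {a, b} = G"
  by (metis Diff_insert_absorb del_edge_def edges_add_edge graph_eq_Pair verts_add_edge)

lemma reach_del_edge_cases:
  assumes "reach G x y"
  shows "reach (del_edge G e) x y \<or> (\<exists>z\<in>e. reach (del_edge G e) z y)"
  using assms unfolding reach_def[of G]
proof (induction rule: converse_rtranclp_induct)
  case (step a z)
  show ?case
  proof (cases "{a, z} = e")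
    case False
    then have "reach (del_edge G e) a z" using step(1) by (intro reach_edge) simp
    then show ?thesis using step(3) reach_trans by blast
  qed (use step(3) in auto)
qed simp

section \<open>Joining two components by an edge\<close>

locale edge_between_components =
  fixes G :: graph and u v :: nat
  assumes graph: "is_graph G" and u: "u \<in> verts G" and v: "v \<in> verts G"
    and not_reach: "\<not> reach G u v"
begin

abbreviation "H \<equiv> add_edge G u v"
abbreviation "Su \<equiv> comp_of G u"
abbreviation "Sv \<equiv> comp_of G v"

lemma Su_in_comp_sets: "Su \<in> comp_sets G" and Sv_in_comp_sets: "Sv \<in> comp_sets G"
  using u v unfolding comp_sets_def by auto

lemma Su_neq_Sv: "Su \<noteq> Sv"
  using comp_of_eq_iff[OF u] not_reach by blast

lemma Su_Sv_disjoint: "Su \<inter> Sv = {}"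
  using Su_neq_Sv comp_sets_disjoint[OF Su_in_comp_sets Sv_in_comp_sets] by blast

lemma Su_union_Sv_notin_comp_sets: "Su \<union> Sv \<notin> comp_sets G"
proof
  assume "Su \<union> Sv \<in> comp_sets G"
  then have "Su \<union> Sv = Su" "Su \<union> Sv = Sv"
    using comp_sets_disjoint Su_in_comp_sets Sv_in_comp_sets comp_of_self u v by blast+
  then show False using Su_neq_Sv by blast
qed

lemma comp_of_add_edge:
  assumes w: "w \<in> verts G"
  shows "comp_of H w = (if w \<in> Su \<union> Sv then Su \<union> Sv else comp_of G w)"
proof -
  consider (in_Su) "reach G w u" | (in_Sv) "reach G w v" | (other) "\<not> reach G w u" "\<not> reach G w v"
    by blast
  then show ?thesis
  proof cases
    case in_Su
    then have "\<not> reach G w v" using not_reach reach_iff_of_reach by blast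
    then have "reach H w x \<longleftrightarrow> reach G u x \<or> reach G v x" for x
      using in_Su reach_iff_of_reach[OF in_Su] unfolding reach_add_edge by blast
    moreover have "w \<in> Su" using in_Su w reach_sym unfolding comp_of_def by blast
    ultimately show ?thesis unfolding comp_of_def by auto
  next
    case in_Sv
    then have "\<not> reach G w u" using not_reach reach_iff_of_reach reach_sym by blast
    then have "reach H w x \<longleftrightarrow> reach G u x \<or> reach G v x" for x
      using in_Sv reach_iff_of_reach[OF in_Sv] unfolding reach_add_edge by blast
    moreover have "w \<in> Sv" using in_Sv w reach_sym unfolding comp_of_def by blast
    ultimately show ?thesis unfolding comp_of_def by auto
  next
    case other
    then have "reach H w x \<longleftrightarrow> reach G w x" for x
      unfolding reach_add_edge by blast
    moreover have "w \<notin> Su \<union> Sv" using other reach_sym unfolding comp_of_def by blast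
    ultimately show ?thesis unfolding comp_of_def by auto
  qed
qed

lemma comp_sets_add_edge: "comp_sets H = insert (Su \<union> Sv) (comp_sets G - {Su, Sv})"
proof (rule set_eqI)
  fix S
  have "S \<in> comp_sets H \<longleftrightarrow>
      (\<exists>w\<in>verts G. S = (if w \<in> Su \<union> Sv then Su \<union> Sv else comp_of G w))"
    unfolding comp_sets_def using comp_of_add_edge by auto
  also have "\<dots> \<longleftrightarrow> S = Su \<union> Sv \<or> S \<in> comp_sets G - {Su, Sv}"
  proof
    assume "\<exists>w\<in>verts G. S = (if w \<in> Su \<union> Sv then Su \<union> Sv else comp_of G w)"
    then obtain w where w: "w \<in> verts G" "S = (if w \<in> Su \<union> Sv then Su \<union> Sv else comp_of G w)"
      by blast
    then show "S = Su \<union> Sv \<or> S \<in> comp_sets G - {Su, Sv}"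
      using comp_of_self[OF w(1)] unfolding comp_sets_def by (cases "w \<in> Su \<union> Sv") auto
  next
    assume "S = Su \<union> Sv \<or> S \<in> comp_sets G - {Su, Sv}"
    then show "\<exists>w\<in>verts G. S = (if w \<in> Su \<union> Sv then Su \<union> Sv else comp_of G w)"
    proof
      assume "S = Su \<union> Sv"
      then show ?thesis using u comp_of_self[OF u] by (intro bexI[of _ u]) auto
    next
      assume "S \<in> comp_sets G - {Su, Sv}"
      then obtain w where w: "w \<in> verts G" "S = comp_of G w" "comp_of G w \<notin> {Su, Sv}"
        unfolding comp_sets_def by auto
      then have "w \<notin> Su \<union> Sv" using comp_of_eq by blast
      then show ?thesis using w by auto
    qed
  qed
  finally show "S \<in> comp_sets H \<longleftrightarrow> S \<in> insert (Su \<union> Sv) (comp_sets G - {Su, Sv})"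
    by blast
qed

lemma induced_add_edge_other:
  assumes "S \<in> comp_sets G - {Su, Sv}"
  shows "induced H S = induced G S"
proof -
  have "u \<notin> S"
    using assms comp_sets_disjoint[OF _ Su_in_comp_sets] comp_of_self[OF u] by blast
  then show ?thesis unfolding induced_def by auto
qed

lemma induced_add_edge_Su_union_Sv:
  "induced H (Su \<union> Sv) = join_by_edge (induced G Su) (induced G Sv) u v"
proof -
  have "e \<subseteq> Su \<or> e \<subseteq> Sv" if e: "e \<in> edges G" "e \<subseteq> Su \<union> Sv" for e
  proof -
    obtain a b where ab: "e = {a, b}" using graph e(1) unfolding is_graph_def by blast
    then have "reach G a b" using e(1) reach_edge by blast
    then have "\<not> (a \<in> Su \<and> b \<in> Sv)" "\<not> (a \<in> Sv \<and> b \<in> Su)"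
      using not_reach reach_iff_of_reach reach_sym unfolding comp_of_def by blast+
    then show ?thesis using e(2) ab by auto
  qed
  then have "{e \<in> insert {u, v} (edges G). e \<subseteq> Su \<union> Sv} =
        insert {u, v} ({e \<in> edges G. e \<subseteq> Su} \<union> {e \<in> edges G. e \<subseteq> Sv})"
    using comp_of_self[OF u] comp_of_self[OF v] by auto
  moreover have "induced H (Su \<union> Sv) = (Su \<union> Sv, {e \<in> insert {u, v} (edges G). e \<subseteq> Su \<union> Sv})"
    by (simp add: induced_def)
  moreover have "join_by_edge (induced G Su) (induced G Sv) u v =
      (Su \<union> Sv, insert {u, v} ({e \<in> edges G. e \<subseteq> Su} \<union> {e \<in> edges G. e \<subseteq> Sv}))"
    by (simp add: join_by_edge_def)
  ultimately show ?thesis by simp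
qed

lemma comps_in_add_edge:
  assumes "bridge_stable \<C>" and Su_in: "Su \<in> comps_in \<C> G"
  shows "comps_in \<C> H =
    (if Sv \<in> comps_in \<C> G then insert (Su \<union> Sv) (comps_in \<C> G - {Su, Sv})
     else comps_in \<C> G - {Su})"
proof -
  have Su_sub: "Su \<subseteq> verts G" and Sv_sub: "Sv \<subseteq> verts G"
    using Su_in_comp_sets Sv_in_comp_sets comp_sets_subset by blast+
  have "induced G Su \<in> \<C>" using Su_in unfolding comps_in_def by simp
  then have join_in: "join_by_edge (induced G Su) (induced G Sv) u v \<in> \<C> \<longleftrightarrow> induced G Sv \<in> \<C>"
    using assms(1)[unfolded bridge_stable_def, rule_format,
        OF is_graph_induced[OF graph Su_sub] is_graph_induced[OF graph Sv_sub]]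
      Su_Sv_disjoint comp_of_self[OF u] comp_of_self[OF v]
    by auto
  have "S \<in> comps_in \<C> H \<longleftrightarrow> (S = Su \<union> Sv \<and> induced G Sv \<in> \<C>) \<or>
      (S \<in> comp_sets G - {Su, Sv} \<and> induced G S \<in> \<C>)" for S
  proof (cases "S = Su \<union> Sv")
    case True
    then show ?thesis unfolding comps_in_def comp_sets_add_edge
      using induced_add_edge_Su_union_Sv join_in Su_union_Sv_notin_comp_sets by simp
  next
    case not_union: False
    show ?thesis
    proof (cases "S \<in> comp_sets G - {Su, Sv}")
      case True
      then show ?thesis unfolding comps_in_def comp_sets_add_edge
        using not_union induced_add_edge_other[OF True] by simp
    qed (use not_union in \<open>auto simp: comps_in_def comp_sets_add_edge\<close>)
  qed
  then show ?thesis
    using Sv_in_comp_sets unfolding comps_in_def by auto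
qed

text \<open>By bridge-stability the merged component lies in \<open>\<C>\<close> exactly when \<open>Sv\<close> does, so either
  two \<open>\<C>\<close>-components become one, or \<open>Su\<close> joins the components outside \<open>\<C>\<close>.\<close>
lemma kappa_plus_add_edge:
  assumes "bridge_stable \<C>" and Su_in: "Su \<in> comps_in \<C> G"
  shows "kappa_plus H \<C> + 1 = kappa_plus G \<C>"
proof -
  have "finite (comp_sets G)"
    using graph unfolding comp_sets_def is_graph_def by simp
  then have fin: "finite (comps_in \<C> G)" using comps_in_subset finite_subset by blast
  have union_notin: "Su \<union> Sv \<notin> comps_in \<C> G"
    using Su_union_Sv_notin_comp_sets comps_in_subset by blast
  note comps_H = comps_in_add_edge[OF assms]
  show ?thesis
  proof (cases "Sv \<in> comps_in \<C> G")
    case True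
    then have "card {Su, Sv} \<le> card (comps_in \<C> G)"
      using Su_in fin by (intro card_mono) auto
    then have "card (comps_in \<C> H) + 1 = card (comps_in \<C> G)"
      using comps_H True Su_in Su_neq_Sv union_notin fin by (simp add: card_Diff_subset)
    moreover have "comps_in \<C> H = comp_sets H \<longleftrightarrow> comps_in \<C> G = comp_sets G"
      using comps_H True Su_in comp_sets_add_edge union_notin Su_union_Sv_notin_comp_sets
        Su_in_comp_sets Sv_in_comp_sets comps_in_subset
      by (auto simp: insert_ident)
    ultimately show ?thesis by (simp add: kappa_plus_eq)
  next
    case False
    then have "card (comps_in \<C> H) + 1 = card (comps_in \<C> G)"
      using comps_H False Su_in fin by (metis Suc_eq_plus1 card_Suc_Diff1)
    moreover have "comps_in \<C> H \<noteq> comp_sets H" "comps_in \<C> G \<noteq> comp_sets G"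
      using comps_H False comp_sets_add_edge union_notin Sv_in_comp_sets by auto
    ultimately show ?thesis by (simp add: kappa_plus_eq)
  qed
qed

end

section \<open>Counting bridges\<close>

definition bridges :: "graph \<Rightarrow> (nat \<times> nat) set" where
  "bridges G = {(a, b). a \<in> verts G \<and> b \<in> verts G \<and> {a, b} \<in> edges G \<and>
      \<not> reach (del_edge G {a, b}) a b}"

lemma bridge_add_edge:
  assumes "a \<in> verts G" "b \<in> verts G" "\<not> reach G a b"
  shows "(a, b) \<in> bridges (add_edge G a b)"
proof -
  have "{a, b} \<notin> edges G" using assms(3) reach_edge by blast
  then show ?thesis using assms unfolding bridges_def by (simp add: del_edge_add_edge)
qed

text \<open>A path to \<open>r\<close> from the far end of one of the two edges would avoid the other one.\<close>
lemma separating_edge_unique: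
  assumes ex: "{w, x} \<in> edges G" and ey: "{w, y} \<in> edges G" and wr: "reach G w r"
    and nx: "\<not> reach (del_edge G {w, x}) w r" and ny: "\<not> reach (del_edge G {w, y}) w r"
  shows "x = y"
proof (rule ccontr)
  assume "x \<noteq> y"
  then have ef: "{w, x} \<noteq> {w, y}" by (auto simp: doubleton_eq_iff)
  define G' where "G' = del_edge (del_edge G {w, y}) {w, x}"
  have "reach (del_edge G {w, y}) y r"
    using reach_del_edge_cases[OF wr, of "{w, y}"] ny by auto
  then consider "reach G' y r" | z where "z \<in> {w, x}" "reach G' z r"
    using reach_del_edge_cases unfolding G'_def by blast
  then show False
  proof cases
    case 1
    then have "reach (del_edge G {w, x}) y r" by (rule reach_mono[rotated]) (auto simp: G'_def)
    moreover have "reach (del_edge G {w, x}) w y" using ey ef by (intro reach_edge) simp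
    ultimately show False using nx reach_trans by blast
  next
    case (2 z)
    from 2(2) have "reach (del_edge G {w, y}) z r" by (rule reach_mono[rotated]) (auto simp: G'_def)
    moreover have "reach (del_edge G {w, y}) w z"
      using 2(1) ex ef by (cases "z = w") (auto intro!: reach_edge)
    ultimately show False using ny reach_trans by blast
  qed
qed

definition comp_root :: "graph \<Rightarrow> nat \<Rightarrow> nat" where
  "comp_root G x = Min (comp_of G x)"

lemma comp_root_in_comp_of:
  assumes "finite (verts G)" "x \<in> verts G"
  shows "comp_root G x \<in> comp_of G x"
  unfolding comp_root_def using assms comp_of_self
  by (intro Min_in) (auto simp: comp_of_def)

lemma comp_root_eq: "x \<in> comp_of G y \<Longrightarrow> comp_root G x = comp_root G y"
  unfolding comp_root_def by (simp add: comp_of_eq)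

lemma comp_root_comp_root:
  "finite (verts G) \<Longrightarrow> x \<in> verts G \<Longrightarrow> comp_root G (comp_root G x) = comp_root G x"
  using comp_root_in_comp_of comp_root_eq by blast

lemma card_comp_roots:
  assumes fin: "finite (verts G)"
  shows "card (comp_root G ` verts G) = card (comp_sets G)"
proof -
  have "comp_root G ` verts G = Min ` comp_sets G"
    unfolding comp_sets_def comp_root_def by (simp add: image_image)
  moreover have "inj_on Min (comp_sets G)"
  proof (rule inj_onI)
    fix S T assume S: "S \<in> comp_sets G" and T: "T \<in> comp_sets G" and "Min S = Min T"
    moreover have "finite S" "finite T"
      using S T comp_sets_subset fin finite_subset by blast+
    ultimately have "Min S \<in> S \<inter> T" using comp_sets_nonempty by (metis IntI Min_in)
    then show "S = T" using comp_sets_disjoint[OF S T] by blast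
  qed
  ultimately show ?thesis by (simp add: card_image)
qed

lemma comp_root_bridge:
  assumes "(a, b) \<in> bridges G"
  shows "comp_root G b = comp_root G a"
proof -
  have "b \<in> comp_of G a" using assms reach_edge[of a b G] unfolding bridges_def comp_of_def by auto
  then show ?thesis by (rule comp_root_eq)
qed

text \<open>Orient a bridge towards the side of it not containing the root of its component; the
  endpoint on that side is never a root.\<close>
definition far_end :: "graph \<Rightarrow> nat \<times> nat \<Rightarrow> nat \<times> bool" where
  "far_end G = (\<lambda>(a, b).
     if reach (del_edge G {a, b}) a (comp_root G a) then (b, False) else (a, True))"

lemma far_end_cut_off:
  assumes "(a, b) \<in> bridges G"
  shows "fst (far_end G (a, b)) \<in> {a, b}"
    and "\<not> reach (del_edge G {a, b}) (fst (far_end G (a, b))) (comp_root G a)"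
proof -
  have "\<not> reach (del_edge G {a, b}) a b" using assms unfolding bridges_def by simp
  then have "\<not> reach (del_edge G {a, b}) b (comp_root G a)"
    if "reach (del_edge G {a, b}) a (comp_root G a)"
    using that reach_sym reach_trans by metis
  then show "fst (far_end G (a, b)) \<in> {a, b}"
    and "\<not> reach (del_edge G {a, b}) (fst (far_end G (a, b))) (comp_root G a)"
    unfolding far_end_def by auto
qed

lemma far_end_not_root:
  assumes fin: "finite (verts G)" and ab: "(a, b) \<in> bridges G"
  shows "fst (far_end G (a, b)) \<in> verts G - comp_root G ` verts G"
proof -
  define w where "w = fst (far_end G (a, b))"
  have "a \<in> verts G" "b \<in> verts G" and "reach G a b"
    using ab reach_edge unfolding bridges_def by auto
  then have w: "w \<in> verts G" "w \<in> comp_of G a"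
    using far_end_cut_off(1)[OF ab] unfolding w_def comp_of_def by auto
  have "w \<noteq> comp_root G x" if "x \<in> verts G" for x
  proof
    assume "w = comp_root G x"
    then have "comp_root G a = w"
      using comp_root_eq[OF w(2)] comp_root_comp_root[OF fin that] by simp
    then show False using far_end_cut_off(2)[OF ab] unfolding w_def by simp
  qed
  then show ?thesis using w unfolding w_def by blast
qed

lemma inj_on_far_end:
  assumes fin: "finite (verts G)"
  shows "inj_on (far_end G) (bridges G)"
proof (rule inj_onI, clarify)
  fix a b a' b'
  assume ab: "(a, b) \<in> bridges G" and ab': "(a', b') \<in> bridges G"
    and eq: "far_end G (a, b) = far_end G (a', b')"
  have edges: "{a, b} \<in> edges G" "{a', b'} \<in> edges G"
    and verts: "a \<in> verts G" "b \<in> verts G"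
    using ab ab' unfolding bridges_def by auto
  note cut = far_end_cut_off(2)[OF ab] far_end_cut_off(2)[OF ab']
  show "a = a' \<and> b = b'"
  proof (cases "reach (del_edge G {a, b}) a (comp_root G a)")
    case False
    then have "a' = a" "fst (far_end G (a, b)) = a"
      using eq unfolding far_end_def by (auto split: if_splits)
    moreover have "reach G a (comp_root G a)"
      using comp_root_in_comp_of[OF fin verts(1)] unfolding comp_of_def by simp
    ultimately show ?thesis
      using separating_edge_unique[of a b G b' "comp_root G a"] edges cut eq by auto
  next
    case True
    then have "b' = b" "fst (far_end G (a, b)) = b"
      using eq unfolding far_end_def by (auto split: if_splits)
    moreover have "reach G b (comp_root G b)"
      using comp_root_in_comp_of[OF fin verts(2)] unfolding comp_of_def by simp
    ultimately show ?thesis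
      using separating_edge_unique[of b a G a' "comp_root G b"] edges cut eq
        comp_root_bridge[OF ab] comp_root_bridge[OF ab']
      by (auto simp: insert_commute)
  qed
qed

lemma card_bridges_le:
  assumes fin: "finite (verts G)"
  shows "card (bridges G) \<le> 2 * (card (verts G) - card (comp_sets G))"
proof -
  have roots_sub: "comp_root G ` verts G \<subseteq> verts G"
    using comp_root_in_comp_of[OF fin] unfolding comp_of_def by auto
  have "card (bridges G) = card (far_end G ` bridges G)"
    using inj_on_far_end[OF fin] by (simp add: card_image)
  also have "\<dots> \<le> card ((verts G - comp_root G ` verts G) \<times> (UNIV :: bool set))"
  proof (intro card_mono image_subsetI)
    fix p assume "p \<in> bridges G"
    then show "far_end G p \<in> (verts G - comp_root G ` verts G) \<times> UNIV"
      using far_end_not_root[OF fin, of "fst p" "snd p"] by (simp add: mem_Times_iff)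
  qed (use fin in simp)
  also have "\<dots> = 2 * (card (verts G) - card (comp_sets G))"
    using roots_sub fin card_comp_roots[OF fin]
    by (simp add: card_cartesian_product card_Diff_subset finite_subset)
  finally show ?thesis .
qed

section \<open>Switch pairs\<close>

text \<open>All components outside \<open>\<C>\<close> share the label \<open>{}\<close>, which is not the vertex set of any
  component; so the labels realise the \<open>\<kappa>\<^sup>+\<close> classes.\<close>
definition comp_label :: "graph set \<Rightarrow> graph \<Rightarrow> nat \<Rightarrow> nat set" where
  "comp_label \<C> G x = (if comp_of G x \<in> comps_in \<C> G then comp_of G x else {})"

lemma comp_labels_eq:
  "comp_label \<C> G ` verts G =
    (if comps_in \<C> G = comp_sets G then comps_in \<C> G else insert {} (comps_in \<C> G))"
proof -
  have sub: "comp_label \<C> G ` verts G \<subseteq> insert {} (comps_in \<C> G)"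
    unfolding comp_label_def by auto
  have sup: "comps_in \<C> G \<subseteq> comp_label \<C> G ` verts G"
  proof
    fix S assume S: "S \<in> comps_in \<C> G"
    then obtain x where "x \<in> verts G" "S = comp_of G x"
      unfolding comps_in_def comp_sets_def by blast
    then show "S \<in> comp_label \<C> G ` verts G" using S unfolding comp_label_def by auto
  qed
  have empty: "{} \<in> comp_label \<C> G ` verts G \<longleftrightarrow> comps_in \<C> G \<noteq> comp_sets G"
  proof
    assume "{} \<in> comp_label \<C> G ` verts G"
    then obtain x where x: "x \<in> verts G" "comp_label \<C> G x = {}" by force
    then have "comp_of G x \<notin> comps_in \<C> G"
      using comp_of_self[OF x(1)] unfolding comp_label_def by auto
    with x(1) show "comps_in \<C> G \<noteq> comp_sets G" unfolding comp_sets_def by blast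
  next
    assume "comps_in \<C> G \<noteq> comp_sets G"
    then obtain x where "x \<in> verts G" "comp_of G x \<notin> comps_in \<C> G"
      using comps_in_subset unfolding comp_sets_def by blast
    then show "{} \<in> comp_label \<C> G ` verts G" unfolding comp_label_def by force
  qed
  show ?thesis
  proof (cases "comps_in \<C> G = comp_sets G")
    case True
    then have "comp_label \<C> G ` verts G \<subseteq> comps_in \<C> G"
      using sub empty by (simp add: subset_insert)
    then show ?thesis using True sup by simp
  qed (use sub sup empty in auto)
qed

lemma card_comp_labels:
  assumes "finite (verts G)"
  shows "card (comp_label \<C> G ` verts G) = kappa_plus G \<C>"
proof -
  have "finite (comp_sets G)" using assms by (simp add: comp_sets_def)
  then have "finite (comps_in \<C> G)" using comps_in_subset finite_subset by blast
  moreover have "{} \<notin> comps_in \<C> G" using comps_in_subset comp_sets_nonempty by blast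
  ultimately show ?thesis unfolding comp_labels_eq kappa_plus_eq by simp
qed

definition switch_pairs :: "graph set \<Rightarrow> graph \<Rightarrow> (nat \<times> nat) set" where
  "switch_pairs \<C> G = {(a, b) \<in> verts G \<times> verts G. comp_label \<C> G a \<noteq> comp_label \<C> G b}"

lemma switch_pair_not_reach:
  assumes "(a, b) \<in> switch_pairs \<C> G"
  shows "\<not> reach G a b"
proof
  assume "reach G a b"
  then have "comp_of G a = comp_of G b"
    using assms comp_of_eq_iff unfolding switch_pairs_def by blast
  then have "comp_label \<C> G a = comp_label \<C> G b" unfolding comp_label_def by simp
  then show False using assms unfolding switch_pairs_def by simp
qed

lemma switch_pair_cases:
  assumes "(a, b) \<in> switch_pairs \<C> G"
  shows "comp_of G a \<in> comps_in \<C> G \<or> comp_of G b \<in> comps_in \<C> G"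
  using assms unfolding switch_pairs_def comp_label_def by auto

lemma kappa_plus_add_switch_edge:
  assumes "is_graph G" "bridge_stable \<C>" and ab: "(a, b) \<in> switch_pairs \<C> G"
  shows "kappa_plus (add_edge G a b) \<C> + 1 = kappa_plus G \<C>"
proof -
  have "a \<in> verts G" "b \<in> verts G" "\<not> reach G a b" "\<not> reach G b a"
    using ab switch_pair_not_reach reach_sym unfolding switch_pairs_def by blast+
  then interpret ab: edge_between_components G a b
    + ba: edge_between_components G b a
    using assms(1) by unfold_locales
  show ?thesis
    using switch_pair_cases[OF ab] ab.kappa_plus_add_edge[OF assms(2)]
      ba.kappa_plus_add_edge[OF assms(2)] add_edge_commute[of G a b]
    by auto
qed

lemma sum_squares_le_square_sum: "(\<Sum>x\<in>L. (q x :: nat)\<^sup>2) \<le> (\<Sum>x\<in>L. q x)\<^sup>2"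
proof (induction L rule: infinite_finite_induct)
  case (insert x F)
  then show ?case by (simp add: power2_sum)
qed auto

lemma sum_squares_parts_le:
  fixes p :: "'a \<Rightarrow> nat"
  assumes pos: "\<forall>l\<in>L. 1 \<le> p l" and parts: "k + 1 \<le> card L"
  shows "2 * k * (sum p L - k) + (\<Sum>l\<in>L. (p l)\<^sup>2) \<le> (sum p L)\<^sup>2"
proof -
  define q where "q l = p l - 1" for l
  define T where "T = sum q L"
  obtain s where s: "card L = k + 1 + s" using le_Suc_ex[OF parts] by blast
  have p_eq: "\<forall>l\<in>L. p l = q l + 1" using pos unfolding q_def by auto
  have "sum p L = (\<Sum>l\<in>L. q l + 1)" using p_eq by (intro sum.cong) auto
  then have sum_p: "sum p L = T + k + 1 + s" using s unfolding sum.distrib T_def by simp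
  have "(\<Sum>l\<in>L. (p l)\<^sup>2) = (\<Sum>l\<in>L. (q l)\<^sup>2 + 2 * q l + 1)"
    using p_eq by (intro sum.cong) (auto simp: power2_eq_square algebra_simps)
  also have "\<dots> = (\<Sum>l\<in>L. (q l)\<^sup>2) + 2 * T + (k + 1 + s)"
    using s unfolding T_def sum.distrib sum_distrib_left[symmetric] by simp
  also have "\<dots> \<le> T\<^sup>2 + 2 * T + (k + 1 + s)"
    using sum_squares_le_square_sum[of q L] unfolding T_def by simp
  finally have sum_p2: "(\<Sum>l\<in>L. (p l)\<^sup>2) \<le> T\<^sup>2 + 2 * T + (k + 1 + s)" .
  have "2 * k * (sum p L - k) + (\<Sum>l\<in>L. (p l)\<^sup>2) \<le>
      2 * k * (T + 1 + s) + (T\<^sup>2 + 2 * T + (k + 1 + s))"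
    using sum_p sum_p2 by simp
  also have "\<dots> \<le> (T + k + 1 + s)\<^sup>2"
  proof -
    have "(T + k + 1 + s)\<^sup>2 + k =
        2 * k * (T + 1 + s) + (T\<^sup>2 + 2 * T + (k + 1 + s)) + (k * k + s * s + 2 * T * s + s)"
      by (simp add: power2_eq_square algebra_simps)
    moreover have "k \<le> k * k" by simp
    ultimately show ?thesis by linarith
  qed
  finally show ?thesis unfolding sum_p .
qed

lemma card_pairs_distinct_labels:
  assumes fin: "finite W" and labels: "k + 1 \<le> card (f ` W)"
  shows "2 * k * (card W - k) \<le> card {(a, b) \<in> W \<times> W. f a \<noteq> f b}"
proof -
  define p where "p l = card {x \<in> W. f x = l}" for l
  define same where "same = (SIGMA a:W. {b \<in> W. f b = f a})"
  have "card same = (\<Sum>a\<in>W. p (f a))"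
    unfolding same_def p_def using fin by simp
  also have "\<dots> = (\<Sum>l\<in>f ` W. \<Sum>a\<in>{x \<in> W. f x = l}. p (f a))"
    by (rule sum.image_gen[OF fin])
  also have "\<dots> = (\<Sum>l\<in>f ` W. (p l)\<^sup>2)"
  proof (rule sum.cong[OF refl])
    fix l
    have "(\<Sum>a\<in>{x \<in> W. f x = l}. p (f a)) = (\<Sum>a\<in>{x \<in> W. f x = l}. p l)"
      by (rule sum.cong) auto
    then show "(\<Sum>a\<in>{x \<in> W. f x = l}. p (f a)) = (p l)\<^sup>2"
      by (simp add: p_def power2_eq_square)
  qed
  finally have card_same: "card same = (\<Sum>l\<in>f ` W. (p l)\<^sup>2)" .
  have card_W: "card W = sum p (f ` W)"
    using sum.image_gen[OF fin, of "\<lambda>_. 1::nat" f] unfolding p_def by simp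
  have "\<forall>l\<in>f ` W. 1 \<le> p l"
    using fin unfolding p_def by (auto simp: Suc_le_eq card_gt_0_iff)
  then have "2 * k * (card W - k) + card same \<le> card W * card W"
    using sum_squares_parts_le[OF _ labels] fin card_same card_W by (simp add: power2_eq_square)
  moreover have "{(a, b) \<in> W \<times> W. f a \<noteq> f b} = W \<times> W - same" "same \<subseteq> W \<times> W"
    unfolding same_def by auto
  ultimately show ?thesis
    using fin by (simp add: card_Diff_subset card_cartesian_product finite_subset)
qed

lemma card_switch_pairs:
  assumes "finite (verts G)" "kappa_plus G \<C> = k + 1"
  shows "2 * k * (card (verts G) - k) \<le> card (switch_pairs \<C> G)"
  unfolding switch_pairs_def
  using card_pairs_distinct_labels[of "verts G" k "comp_label \<C> G"] assms card_comp_labels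
  by simp

lemma finite_switch_pairs: "finite (verts G) \<Longrightarrow> finite (switch_pairs \<C> G)"
  by (rule finite_subset[of _ "verts G \<times> verts G"]) (auto simp: switch_pairs_def)

lemma finite_bridges: "finite (verts G) \<Longrightarrow> finite (bridges G)"
  by (rule finite_subset[of _ "verts G \<times> verts G"]) (auto simp: bridges_def)

lemma inj_on_add_switch_edge:
  "inj_on (\<lambda>(G, a, b). (add_edge G a b, a, b)) (Sigma X (switch_pairs \<C>))"
proof (rule inj_onI)
  fix x y assume "x \<in> Sigma X (switch_pairs \<C>)" "y \<in> Sigma X (switch_pairs \<C>)"
    and "(\<lambda>(G, a, b). (add_edge G a b, a, b)) x = (\<lambda>(G, a, b). (add_edge G a b, a, b)) y"
  then obtain G G' a b where xy: "x = (G, a, b)" "y = (G', a, b)"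
    and ab: "(a, b) \<in> switch_pairs \<C> G" "(a, b) \<in> switch_pairs \<C> G'"
    and eq: "add_edge G a b = add_edge G' a b"
    by auto
  have "{a, b} \<notin> edges G" "{a, b} \<notin> edges G'"
    using switch_pair_not_reach[OF ab(1)] switch_pair_not_reach[OF ab(2)] reach_edge by blast+
  then have "G = G'" using eq del_edge_add_edge by metis
  then show "x = y" using xy by simp
qed

section \<open>Counting and Poisson tails\<close>

lemma double_counting_le:
  assumes "finite S" "\<And>x. x \<in> S \<Longrightarrow> finite (X x)" "finite T" "\<And>y. y \<in> T \<Longrightarrow> finite (Y y)"
    and "inj_on f (Sigma S X)" "f ` Sigma S X \<subseteq> Sigma T Y"
    and "\<And>x. x \<in> S \<Longrightarrow> a \<le> card (X x)" "\<And>y. y \<in> T \<Longrightarrow> card (Y y) \<le> b"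
  shows "card S * a \<le> card T * b"
proof -
  have "card S * a \<le> (\<Sum>x\<in>S. card (X x))"
    using sum_bounded_below[of S a "\<lambda>x. card (X x)"] assms(7) by (simp add: mult.commute)
  also have "\<dots> = card (f ` Sigma S X)"
    using assms(1,2,5) by (simp add: card_image)
  also have "\<dots> \<le> card (Sigma T Y)"
    using assms(3,4,6) by (intro card_mono) auto
  also have "\<dots> \<le> card T * b"
    using sum_bounded_above[of T "\<lambda>y. card (Y y)" b] assms(3,4,8) by (simp add: mult.commute)
  finally show ?thesis .
qed

lemma pmf_poisson_1: "pmf (poisson_pmf 1) k = exp (-1) / fact k"
  by simp

lemma sum_pmf_lessThan:
  fixes p :: "nat pmf"
  shows "(\<Sum>k<m. pmf p k) = 1 - measure_pmf.prob p {k. m \<le> k}"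
proof -
  have "UNIV - {k. m \<le> k} = {..<m}" by auto
  then show ?thesis
    using measure_pmf.prob_compl[of "{k. m \<le> k}" p] measure_measure_pmf_finite[of "{..<m}" p]
    by simp
qed

text \<open>\<open>\<beta> k * k!\<close> decreases, so \<open>\<beta>\<close> lies below a multiple of the Poisson(1) weights from \<open>m\<close>
  on and above it before \<open>m\<close>; the multiple makes the two agree at \<open>m\<close>.\<close>
lemma poisson_1_envelope:
  fixes \<beta> :: "nat \<Rightarrow> real" and m :: nat
  assumes ratio: "\<And>k. real (Suc k) * \<beta> (Suc k) \<le> \<beta> k"
  defines "R \<equiv> \<beta> m * fact m * exp 1"
  shows "m \<le> k \<Longrightarrow> \<beta> k \<le> R * pmf (poisson_pmf 1) k"
    and "k \<le> m \<Longrightarrow> R * pmf (poisson_pmf 1) k \<le> \<beta> k"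
proof -
  have "decseq (\<lambda>k. \<beta> k * fact k)"
  proof (rule decseq_SucI)
    fix k
    have "\<beta> (Suc k) * fact (Suc k) = (real (Suc k) * \<beta> (Suc k)) * fact k" by simp
    also have "\<dots> \<le> \<beta> k * fact k" using ratio by (intro mult_right_mono) auto
    finally show "\<beta> (Suc k) * fact (Suc k) \<le> \<beta> k * fact k" .
  qed
  then have mono: "\<beta> j * fact j \<le> \<beta> i * fact i" if "i \<le> j" for i j
    using that by (simp add: decseq_def)
  have R_pmf: "R * pmf (poisson_pmf 1) k = \<beta> m * fact m / fact k"
    unfolding R_def pmf_poisson_1 by (simp add: exp_minus field_simps)
  show "m \<le> k \<Longrightarrow> \<beta> k \<le> R * pmf (poisson_pmf 1) k"
    and "k \<le> m \<Longrightarrow> R * pmf (poisson_pmf 1) k \<le> \<beta> k"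
    unfolding R_pmf using mono by (simp_all add: field_simps)
qed

lemma sum_tail_le_poisson_tail:
  fixes \<beta> :: "nat \<Rightarrow> real"
  assumes nonneg: "\<And>k. 0 \<le> \<beta> k" and ratio: "\<And>k. real (Suc k) * \<beta> (Suc k) \<le> \<beta> k"
  shows "(\<Sum>k\<in>{m..<n}. \<beta> k) \<le> (\<Sum>k<n. \<beta> k) * measure_pmf.prob (poisson_pmf 1) {k. m \<le> k}"
proof (cases "m \<le> n")
  case False
  then show ?thesis using nonneg by (simp add: sum_nonneg)
next
  case True
  define Q where "Q = measure_pmf.prob (poisson_pmf 1) {k. m \<le> k}"
  define R where "R = \<beta> m * fact m * exp 1"
  note envelope = poisson_1_envelope[OF ratio, where m = m, folded R_def]
  have "0 \<le> R" unfolding R_def using nonneg by simp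
  have "(\<Sum>k\<in>{m..<n}. \<beta> k) \<le> (\<Sum>k\<in>{m..<n}. R * pmf (poisson_pmf 1) k)"
    by (intro sum_mono envelope(1)) simp
  also have "\<dots> = R * measure_pmf.prob (poisson_pmf 1) {m..<n}"
    by (simp add: measure_measure_pmf_finite sum_distrib_left)
  also have "\<dots> \<le> R * Q"
    unfolding Q_def using \<open>0 \<le> R\<close> by (intro mult_left_mono measure_pmf.finite_measure_mono) auto
  finally have tail_le: "(\<Sum>k\<in>{m..<n}. \<beta> k) \<le> R * Q" .
  have "R * (1 - Q) = (\<Sum>k<m. R * pmf (poisson_pmf 1) k)"
    unfolding Q_def sum_pmf_lessThan[symmetric] by (rule sum_distrib_left)
  also have "\<dots> \<le> (\<Sum>k<m. \<beta> k)"
    by (intro sum_mono envelope(2)) simp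
  finally have head_ge: "R * (1 - Q) \<le> (\<Sum>k<m. \<beta> k)" .
  define N where "N = (\<Sum>k<n. \<beta> k)"
  have N_split: "N = (\<Sum>k<m. \<beta> k) + (\<Sum>k\<in>{m..<n}. \<beta> k)"
    unfolding N_def using True by (metis atLeast0LessThan sum.atLeastLessThan_concat zero_le)
  have "0 \<le> Q" "Q \<le> 1" unfolding Q_def by auto
  \<comment> \<open>The tail is at most \<open>R Q\<close> and at most \<open>N - R (1 - Q)\<close>; average the two bounds.\<close>
  then have "(1 - Q) * (\<Sum>k\<in>{m..<n}. \<beta> k) + Q * (\<Sum>k\<in>{m..<n}. \<beta> k) \<le>
      (1 - Q) * (R * Q) + Q * (N - R * (1 - Q))"
    using tail_le head_ge N_split by (intro add_mono mult_left_mono) auto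
  then show ?thesis unfolding N_def Q_def by (simp add: algebra_simps)
qed

lemma real_less_iff_nat_floor_less:
  assumes "0 \<le> t"
  shows "t < real x \<longleftrightarrow> nat \<lfloor>t\<rfloor> < x"
  using assms by (simp add: floor_less_iff Int.nat_less_iff)

lemma prob_less_le_shifted_tail:
  fixes f :: "'a \<Rightarrow> nat"
  assumes "\<And>m. measure_pmf.prob M {x. m < f x} \<le> measure_pmf.prob N {k. m \<le> k}"
  shows "measure_pmf.prob M {x. t < real (f x)} \<le> measure_pmf.prob N {k. t < 1 + real k}"
proof (cases "t < 0")
  case True
  then have "{k. t < 1 + real k} = UNIV" by auto
  then show ?thesis by simp
next
  case False
  then have "{x. t < real (f x)} = {x. nat \<lfloor>t\<rfloor> < f x}"
    and "{k. t < 1 + real k} = {k. nat \<lfloor>t\<rfloor> \<le> k}"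
    using real_less_iff_nat_floor_less[of t] by (auto simp flip: of_nat_Suc simp: less_Suc_eq_le)
  then show ?thesis using assms by simp
qed

section \<open>The switching argument on \<open>\<A>\<^sub>n\<close>\<close>

lemma finite_slice:
  assumes "\<forall>G\<in>\<A>. is_graph G"
  shows "finite (slice \<A> n)"
proof (rule finite_subset)
  show "slice \<A> n \<subseteq> {{1..n}} \<times> Pow (Pow {1..n})"
  proof
    fix G assume G: "G \<in> slice \<A> n"
    then have "is_graph G" "verts G = {1..n}" using assms unfolding slice_def by auto
    then have "edges G \<subseteq> Pow {1..n}" unfolding is_graph_def by auto
    then have "(verts G, edges G) \<in> {{1..n}} \<times> Pow (Pow {1..n})"
      using \<open>verts G = {1..n}\<close> by simp
    then show "G \<in> {{1..n}} \<times> Pow (Pow {1..n})" by (simp flip: graph_eq_Pair)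
  qed
qed simp

locale switching =
  fixes \<A> \<C> :: "graph set" and n :: nat
  assumes graphs: "\<forall>G\<in>\<A>. is_graph G" and stable: "bridge_stable \<C>"
    and addable: "\<forall>H\<in>\<C>. bridge_addable \<A> H"
begin

definition level :: "nat \<Rightarrow> graph set" where
  "level j = {G \<in> slice \<A> n. kappa_plus G \<C> = j}"

lemma slice_memD:
  assumes "G \<in> slice \<A> n"
  shows "G \<in> \<A>" "is_graph G" "verts G = {1..n}"
  using assms graphs unfolding slice_def by auto

lemma kappa_plus_le_n: "G \<in> slice \<A> n \<Longrightarrow> kappa_plus G \<C> \<le> n"
  using kappa_plus_le_card_verts[of G \<C>] slice_memD(3) by simp

lemma finite_level: "finite (level j)"
  using finite_slice[OF graphs] unfolding level_def by simp

lemma add_edge_in_family: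
  assumes "G \<in> \<A>" "comp_of G a \<in> comps_in \<C> G" "a \<in> verts G"
    and "b \<in> verts G - comp_of G a" "{a, b} \<notin> edges G"
  shows "add_edge G a b \<in> \<A>"
proof -
  define K where "K = induced G (comp_of G a)"
  have "K \<in> components G" "K \<in> \<C>"
    using assms(2) comps_in_subset unfolding K_def components_eq_induced_comp_sets comps_in_def
    by auto
  moreover have "graph_iso K K"
    unfolding graph_iso_def by (intro exI[of _ id]) simp
  ultimately have "\<forall>u\<in>verts K. \<forall>v\<in>verts G - verts K. {u, v} \<notin> edges G \<longrightarrow> add_edge G u v \<in> \<A>"
    using addable assms(1) unfolding bridge_addable_def by blast
  moreover have "a \<in> verts K" "b \<in> verts G - verts K"
    using assms(4) comp_of_self[OF assms(3)] unfolding K_def by auto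
  ultimately show ?thesis using assms(5) by blast
qed

lemma add_switch_edge_in_family:
  assumes "G \<in> \<A>" and ab: "(a, b) \<in> switch_pairs \<C> G"
  shows "add_edge G a b \<in> \<A>"
proof -
  have "\<not> reach G a b" "\<not> reach G b a"
    using switch_pair_not_reach[OF ab] reach_sym by blast+
  then have a: "a \<in> verts G" "b \<in> verts G - comp_of G a"
    and b: "b \<in> verts G" "a \<in> verts G - comp_of G b"
    and "{a, b} \<notin> edges G" "{b, a} \<notin> edges G"
    using ab reach_edge[of a b G] reach_edge[of b a G] unfolding switch_pairs_def comp_of_def by auto
  then consider "add_edge G a b \<in> \<A>" | "add_edge G b a \<in> \<A>"
    using switch_pair_cases[OF ab] add_edge_in_family[OF assms(1) _ a] add_edge_in_family[OF assms(1) _ b]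
    by blast
  then show ?thesis by cases (simp_all add: add_edge_commute)
qed

lemma add_switch_edge_level:
  assumes G: "G \<in> level (Suc k)" and ab: "(a, b) \<in> switch_pairs \<C> G"
  shows "add_edge G a b \<in> level k"
proof -
  have "G \<in> slice \<A> n" and k: "kappa_plus G \<C> = Suc k" using G unfolding level_def by auto
  note G' = slice_memD[OF this(1)]
  have "add_edge G a b \<in> \<A>" by (rule add_switch_edge_in_family[OF G'(1) ab])
  moreover have "kappa_plus (add_edge G a b) \<C> = k"
    using kappa_plus_add_switch_edge[OF G'(2) stable ab] k by simp
  ultimately show ?thesis using G'(3) unfolding level_def slice_def by simp
qed

lemma card_bridges_level: "H \<in> level k \<Longrightarrow> card (bridges H) \<le> 2 * (n - k)"
proof -
  assume "H \<in> level k"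
  then have "verts H = {1..n}" and "kappa_plus H \<C> = k"
    using slice_memD(3) unfolding level_def by auto
  then have "card (bridges H) \<le> 2 * (n - card (comp_sets H))"
    and "k \<le> card (comp_sets H)"
    using card_bridges_le[of H] kappa_plus_le_card_comp_sets[of H \<C>] by simp_all
  then show ?thesis by linarith
qed

text \<open>Double counting of pairs (graph, edge): every switch pair of a graph with \<open>\<kappa>\<^sup>+ = k + 1\<close>
  yields a graph with \<open>\<kappa>\<^sup>+ = k\<close> in which the new edge is a bridge.\<close>
lemma level_ratio: "k * card (level (Suc k)) \<le> card (level k)"
proof (cases "level (Suc k) = {}")
  case False
  then obtain G0 where "G0 \<in> slice \<A> n" "kappa_plus G0 \<C> = Suc k"
    unfolding level_def by auto
  then have "k < n" using kappa_plus_le_n by fastforce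
  have fin_verts: "finite (verts G)" if "G \<in> level j" for G j
    using that slice_memD(3) unfolding level_def by simp
  have "(\<lambda>(G, a, b). (add_edge G a b, a, b)) ` Sigma (level (Suc k)) (switch_pairs \<C>)
      \<subseteq> Sigma (level k) bridges"
  proof (rule image_subsetI)
    fix x assume "x \<in> Sigma (level (Suc k)) (switch_pairs \<C>)"
    then obtain G a b where x: "x = (G, a, b)" and G: "G \<in> level (Suc k)"
      and ab: "(a, b) \<in> switch_pairs \<C> G"
      by auto
    have "(a, b) \<in> bridges (add_edge G a b)"
      using ab switch_pair_not_reach[OF ab] unfolding switch_pairs_def by (auto intro: bridge_add_edge)
    then show "(\<lambda>(G, a, b). (add_edge G a b, a, b)) x \<in> Sigma (level k) bridges"
      using add_switch_edge_level[OF G ab] unfolding x by simp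
  qed
  moreover have "2 * k * (n - k) \<le> card (switch_pairs \<C> G)" if "G \<in> level (Suc k)" for G
    using that card_switch_pairs[of G \<C> k] slice_memD(3) unfolding level_def by auto
  ultimately have "card (level (Suc k)) * (2 * k * (n - k)) \<le> card (level k) * (2 * (n - k))"
    by (intro double_counting_le[OF finite_level _ finite_level _ inj_on_add_switch_edge _ _
          card_bridges_level])
      (simp_all add: finite_switch_pairs finite_bridges fin_verts)
  then have "(k * card (level (Suc k))) * (2 * (n - k)) \<le> card (level k) * (2 * (n - k))"
    by (simp add: ac_simps)
  then show ?thesis using \<open>k < n\<close> by simp
qed simp

lemma card_kappa_plus_in:
  assumes "finite I"
  shows "card {G \<in> slice \<A> n. kappa_plus G \<C> \<in> Suc ` I} = (\<Sum>k\<in>I. card (level (Suc k)))"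
proof -
  have "{G \<in> slice \<A> n. kappa_plus G \<C> \<in> Suc ` I} = (\<Union>k\<in>I. level (Suc k))"
    unfolding level_def by auto
  then show ?thesis
    using assms finite_level by (simp add: card_UN_disjoint level_def disjoint_iff)
qed

lemma card_kappa_plus_greater:
  "real (card {G \<in> slice \<A> n. m < kappa_plus G \<C>})
    \<le> real (card (slice \<A> n)) * measure_pmf.prob (poisson_pmf 1) {k. m \<le> k}"
proof -
  define \<beta> where "\<beta> k = real (card (level (Suc k)))" for k
  have "real (Suc k) * \<beta> (Suc k) \<le> \<beta> k" for k
    using level_ratio[of "Suc k"] unfolding \<beta>_def by (metis of_nat_le_iff of_nat_mult)
  then have tail: "(\<Sum>k\<in>{m..<n}. \<beta> k) \<le> (\<Sum>k<n. \<beta> k) * measure_pmf.prob (poisson_pmf 1) {k. m \<le> k}"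
    by (intro sum_tail_le_poisson_tail) (simp_all add: \<beta>_def)
  have "{G \<in> slice \<A> n. m < kappa_plus G \<C>} = {G \<in> slice \<A> n. kappa_plus G \<C> \<in> Suc ` {m..<n}}"
    using kappa_plus_le_n by (force simp: image_iff Suc_le_eq gr0_conv_Suc)
  then have greater: "real (card {G \<in> slice \<A> n. m < kappa_plus G \<C>}) = (\<Sum>k\<in>{m..<n}. \<beta> k)"
    using card_kappa_plus_in[of "{m..<n}"] unfolding \<beta>_def by simp
  have "(\<Sum>k<n. \<beta> k) = real (card {G \<in> slice \<A> n. kappa_plus G \<C> \<in> Suc ` {..<n}})"
    using card_kappa_plus_in[of "{..<n}"] unfolding \<beta>_def by simp
  also have "\<dots> \<le> real (card (slice \<A> n))"
    using finite_slice[OF graphs] by (intro of_nat_mono card_mono) auto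
  finally have "(\<Sum>k<n. \<beta> k) * measure_pmf.prob (poisson_pmf 1) {k. m \<le> k}
      \<le> real (card (slice \<A> n)) * measure_pmf.prob (poisson_pmf 1) {k. m \<le> k}"
    by (rule mult_right_mono) simp
  then show ?thesis using greater tail by linarith
qed

lemma prob_kappa_plus_greater:
  assumes "slice \<A> n \<noteq> {}"
  shows "measure_pmf.prob (pmf_of_set (slice \<A> n)) {G. m < kappa_plus G \<C>}
    \<le> measure_pmf.prob (poisson_pmf 1) {k. m \<le> k}"
proof -
  have "slice \<A> n \<inter> {G. m < kappa_plus G \<C>} = {G \<in> slice \<A> n. m < kappa_plus G \<C>}"
    by auto
  moreover have "0 < card (slice \<A> n)"
    using assms finite_slice[OF graphs] by (simp add: card_gt_0_iff)
  ultimately show ?thesis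
    using card_kappa_plus_greater measure_pmf_of_set[OF assms finite_slice[OF graphs]]
    by (simp add: divide_le_eq mult.commute)
qed

end

theorem lemma5p2:
  fixes \<A> \<C> :: "graph set" and n :: nat
  assumes "\<forall>G\<in>\<A>. is_graph G"
    and "\<forall>H\<in>\<C>. is_graph H \<and> connected_graph H"
    and "iso_closed \<C>"
    and "bridge_stable \<C>"
    and "\<forall>H\<in>\<C>. bridge_addable \<A> H"
    and "slice \<A> n \<noteq> {}"
  shows "\<forall>t::real.
     measure_pmf.prob (pmf_of_set (slice \<A> n)) {G. real (kappa_plus G \<C>) > t}
       \<le> measure_pmf.prob (poisson_pmf 1) {k. 1 + real k > t}"
proof
  fix t :: real
  interpret switching \<A> \<C> n using assms by unfold_locales auto
  show "measure_pmf.prob (pmf_of_set (slice \<A> n)) {G. real (kappa_plus G \<C>) > t}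
      \<le> measure_pmf.prob (poisson_pmf 1) {k. 1 + real k > t}"
    using prob_less_le_shifted_tail[OF prob_kappa_plus_greater[OF assms(6)]] by simp
qed

end
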